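(* Let $\mathtt{W}_1,\mathtt{W}_2,\mathtt{W}\in\mathcal{U}^{\ast,\circ}$ be words. Then for every marked partition $\widehat{p}\in\mathcal{MP}_{\mathtt{W}}$ (i.e., every marked partition of type $\mathtt{W}$) we have \[ m_{\mathtt{W}_1,\mathtt{W}_2;\widehat{p}} = m_{\mathtt{W}_1,\mathtt{W}_2;\mathtt{W}}, \] where $m_{\mathtt{W}_1,\mathtt{W}_2;\widehat{p}} := \#\{(\widehat{p_1},\widehat{p_2})\in\mathcal{MP}_{\mathtt{W}_1}\times\mathcal{MP}_{\mathtt{W}_2} \mid \Phi(\widehat{p_1},\widehat{p_2})=\widehat{p}\}$ and $m_{\mathtt{W}_1,\mathtt{W}_2;\mathtt{W}}$ is the coefficient of $\mathtt{W}$ in $\mathtt{W}_1\ast\mathtt{W}_2$. In particular, for fixed $\mathtt{W}_1,\mathtt{W}_2$, the number $m_{\mathtt{W}_1,\mathtt{W}_2;\widehat{p}}$ depends only on the type $\mathtt{W}$ of $\widehat{p}$.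
   Context: Let $\mathcal{U}=\{u_j\mid j\in\mathbb{Z}_{\geq0}\}$ be an alphabet; $\mathcal{U}^\ast$ is the set of words (finite concatenations of letters, including the empty word $\mathbf{1}$), and $\mathbb{Q}\langle\mathcal{U}\rangle$ is the $\mathbb{Q}$-vector space with basis $\mathcal{U}^\ast$. The stuffle product $\ast$ on $\mathbb{Q}\langle\mathcal{U}\rangle$ is the $\mathbb{Q}$-bilinear product with $\mathbf{1}\ast\mathtt{W}=\mathtt{W}\ast\mathbf{1}=\mathtt{W}$ and, for $j_1,j_2\in\mathbb{Z}_{\ge0}$ and words $\mathtt{W}_1,\mathtt{W}_2$, $u_{j_1}\mathtt{W}_1\ast u_{j_2}\mathtt{W}_2 = u_{j_1}(\mathtt{W}_1\ast u_{j_2}\mathtt{W}_2)+u_{j_2}(u_{j_1}\mathtt{W}_1\ast\mathtt{W}_2)+u_{j_1+j_2}(\mathtt{W}_1\ast\mathtt{W}_2)$. Let $\mathcal{U}^{\ast,\circ}$ be the set of words not starting with $u_0$ (including $\mathbf{1}$); the span of $\mathcal{U}^{\ast,\circ}$ is closed under $\ast$. For $\mathtt{W}_1,\mathtt{W}_2\in\mathcal{U}^{\ast,\circ}$ write $\mathtt{W}_1\ast\mathtt{W}_2=\sum_{\mathtt{W}\in\mathcal{U}^{\ast,\circ}} m_{\mathtt{W}_1,\mathtt{W}_2;\mathtt{W}}\mathtt{W}$ with $m_{\mathtt{W}_1,\mathtt{W}_2;\mathtt{W}}\in\mathbb{Z}_{\ge0}$. Marked partitions: let $p$ be a partition with distinct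 parts $m_1>\dots>m_d>0$ having multiplicities $n_1,\dots,n_d\in\mathbb{Z}_{>0}$, drawn as a Young diagram (rows top to bottom of weakly decreasing length). A distinct row marking of type $(k_1,\dots,k_d)$ marks, for each $j$, exactly $k_j$ of the $n_j$ rows of length $m_j$, always including the lowest row of length $m_j$. A distinct column marking of type $(z_1,\dots,z_d)$ is a distinct row marking of type $(z_d,\dots,z_1)$ of the conjugate partition; concretely, setting $m_{d+1}=0$, for each $j$ exactly $z_j$ of the columns $m_{j+1}+1,\dots,m_j$ (counted from the left) are marked, always including column $m_j$. A marked partition $\widehat{p}$ is a Young diagram together with a distinct row marking of type $(k_1,\dots,k_d)$ and a distinct column marking of type $(z_1,\dots,z_d)$; its type is the word $u_{k_1}u_0^{z_1-1}\cdots u_{k_d}u_0^{z_d-1}\in\mathcal{U}^{\ast,\circ}$. The empty partition $\emptyset$ is the unique marked partition of type $\mathbf{1}$. $\mathcal{MP}_{\mathtt{W}}$ denotes the set of marked partitions of type $\mathtt{W}$, and $\mathcal{MP}$ the set of all marked partitions. A horizontal block of a (marked) partition is the set of all rows of a given length $m_j$ (obtained by cutting the diagram horizontally below each row containing a corner). The map $\Phi\colon\mathcal{MP}\times\mathcal{MP}\to\mathcal{MP}$: $\Phi(\emptyset,\widehat{p_2})=\widehat{p_2}$, $\Phi(\widehat{p_1},\emptyset)=\widehat{p_1}$; otherwise, cut $\widehat{p_1}$ and $\widehat{p_2}$ into their horizontal blocks and assemble all these blocks into one Young diagram sorted by decreasing length, where if $\widehat{p_1}$ and $\widehat{p_2}$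 both have a block of the same length, the block from $\widehat{p_1}$ is placed directly above the block from $\widehat{p_2}$; the row markings are carried along with the rows; and the $j$-th leftmost column of the result is marked if and only if the $j$-th leftmost column of $\widehat{p_1}$ or of $\widehat{p_2}$ is marked. *)

theory Defs
  imports "HOL-Library.Multiset"
begin

text \<open>Words over the alphabet u_0, u_1, ...: the letter u_j is encoded by the natural number j,
a word is a list of naturals, the empty word is the empty list.\<close>

type_synonym word = "nat list"

definition circ_word :: "word \<Rightarrow> bool" where
  "circ_word w \<longleftrightarrow> (w = [] \<or> hd w \<noteq> 0)"

text \<open>Stuffle product; the result is the multiset of words (with multiplicities = coefficients).\<close>
fun stuffle :: "word \<Rightarrow> word \<Rightarrow> word multiset" where
  "stuffle [] w = {#w#}"
| "stuffle v [] = {#v#}"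
| "stuffle (a # v) (b # w) =
     image_mset ((#) a) (stuffle v (b # w))
   + image_mset ((#) b) (stuffle (a # v) w)
   + image_mset ((#) (a + b)) (stuffle v w)"

definition stuffle_coeff :: "word \<Rightarrow> word \<Rightarrow> word \<Rightarrow> nat" where
  "stuffle_coeff w1 w2 w = count (stuffle w1 w2) w"

text \<open>A marked partition is represented by the list of its rows from top to bottom,
each row given by its length and whether it is row-marked, together with the set of
marked columns (columns numbered 1, 2, ... from the left).\<close>

type_synonym mpart = "(nat \<times> bool) list \<times> nat set"

definition is_mp :: "mpart \<Rightarrow> bool" where
  "is_mp p \<longleftrightarrow> (let rows = fst p; cols = snd p in
      (\<forall>r \<in> set rows. fst r > 0)
    \<and> sorted_wrt (\<ge>) (map fst rows)
    \<and> (\<forall>i < length rows. (Suc i = length rows \<or> fst (rows ! Suc i) < fst (rows ! i))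
                          \<longrightarrow> snd (rows ! i))
    \<and> (\<forall>r \<in> set rows. fst r \<in> cols)
    \<and> (\<forall>c \<in> cols. 1 \<le> c \<and> (\<exists>r \<in> set rows. c \<le> fst r)))"

text \<open>The type of a marked partition: with distinct part lengths m_1 > ... > m_d,
k_j the number of marked rows of length m_j, and z_j the number of marked columns
among m_{j+1}+1, ..., m_j (m_{d+1} = 0), the type is u_{k_1} u_0^{z_1-1} ... u_{k_d} u_0^{z_d-1}.\<close>
definition mp_type :: "mpart \<Rightarrow> word" where
  "mp_type p = (let rows = fst p; cols = snd p;
      ms = remdups (map fst rows);
      nxt = (\<lambda>j. if Suc j < length ms then ms ! Suc j else 0);
      k = (\<lambda>j. length (filter (\<lambda>r. fst r = ms ! j \<and> snd r) rows));
      z = (\<lambda>j. card {c \<in> cols. nxt j < c \<and> c \<le> ms ! j})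
    in concat (map (\<lambda>j. k j # replicate (z j - 1) 0) [0..<length ms]))"

definition MP :: "word \<Rightarrow> mpart set" where
  "MP w = {p. is_mp p \<and> mp_type p = w}"

text \<open>Merging rows sorted by decreasing length; on equal lengths the rows of the first
argument come first (so blocks of the first partition sit above those of the second).\<close>
fun merge_rows :: "(nat \<times> bool) list \<Rightarrow> (nat \<times> bool) list \<Rightarrow> (nat \<times> bool) list" where
  "merge_rows [] ys = ys"
| "merge_rows xs [] = xs"
| "merge_rows (x # xs) (y # ys) =
     (if fst x < fst y then y # merge_rows (x # xs) ys else x # merge_rows xs (y # ys))"

definition Phi :: "mpart \<Rightarrow> mpart \<Rightarrow> mpart" where
  "Phi p1 p2 = (if fst p1 = [] then p2 else if fst p2 = [] then p1
               else (merge_rows (fst p1) (fst p2), snd p1 \<union> snd p2))"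

definition mp_coeff :: "word \<Rightarrow> word \<Rightarrow> mpart \<Rightarrow> nat" where
  "mp_coeff w1 w2 p = card {(p1, p2). p1 \<in> MP w1 \<and> p2 \<in> MP w2 \<and> Phi p1 p2 = p}"

end

theory Submission
  imports Defs
begin

text \<open>Encode a marked partition by its marked columns, each carrying the row markings of the rows
of exactly that length. The type is then read off column by column, and \<open>Phi\<close> becomes a merge of
codes that concatenates the blocks of equal columns. The pairs of codes merging into a given code
are counted by looking at its first entry: it comes from the first code, from the second, or from
both, and in the last case its block splits in exactly one way into an upper part with the
prescribed number of marked rows and a lower part, each empty or ending in a marked row. This is the
recursion defining the stuffle product.\<close>

section \<open>Column codes\<close>

text \<open>An entry \<open>(c, bs)\<close> of a code is a marked column \<open>c\<close> together with the markings, from top to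
bottom, of the rows of length exactly \<open>c\<close>; \<open>bs = []\<close> for a marked column that is not a row length.\<close>

type_synonym col_code = "(nat \<times> bool list) list"

definition ends_marked :: "bool list \<Rightarrow> bool" where
  "ends_marked bs \<longleftrightarrow> bs = [] \<or> last bs"

definition valid_code :: "col_code \<Rightarrow> bool" where
  "valid_code e \<longleftrightarrow> sorted_wrt (>) (map fst e) \<and> (\<forall>(c, bs) \<in> set e. 0 < c \<and> ends_marked bs)"

definition code_word :: "col_code \<Rightarrow> word" where
  "code_word e = map (\<lambda>(c, bs). count_list bs True) e"

fun merge_code :: "col_code \<Rightarrow> col_code \<Rightarrow> col_code" where
  "merge_code [] e = e"
| "merge_code e [] = e"
| "merge_code ((c1, bs1) # e1) ((c2, bs2) # e2) =
    (if c2 < c1 then (c1, bs1) # merge_code e1 ((c2, bs2) # e2)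
     else if c1 < c2 then (c2, bs2) # merge_code ((c1, bs1) # e1) e2
     else (c1, bs1 @ bs2) # merge_code e1 e2)"

lemma valid_code_Nil [simp]: "valid_code []"
  by (simp add: valid_code_def)

lemma valid_code_Cons [simp]:
  "valid_code ((c, bs) # e) \<longleftrightarrow> (\<forall>x \<in> set e. fst x < c) \<and> 0 < c \<and> ends_marked bs \<and> valid_code e"
  by (auto simp: valid_code_def)

lemma code_word_Nil [simp]: "code_word [] = []"
  and code_word_Cons [simp]: "code_word ((c, bs) # e) = count_list bs True # code_word e"
  by (simp_all add: code_word_def)

lemma code_word_eq_Nil_iff [simp]: "code_word e = [] \<longleftrightarrow> e = []"
  by (simp add: code_word_def)

lemma merge_code_Nil2 [simp]: "merge_code e [] = e"
  by (cases e) auto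

lemma merge_code_eq_Nil_iff [simp]: "merge_code e1 e2 = [] \<longleftrightarrow> e1 = [] \<and> e2 = []"
  by (induction e1 e2 rule: merge_code.induct) auto

lemma columns_merge_code: "fst ` set (merge_code e1 e2) = fst ` set e1 \<union> fst ` set e2"
  by (induction e1 e2 rule: merge_code.induct) auto

lemma fst_in_merge_code: "x \<in> set (merge_code e1 e2) \<Longrightarrow> fst x \<in> fst ` set e1 \<union> fst ` set e2"
  by (simp flip: columns_merge_code)

lemma merge_code_Cons_left:
  "\<forall>x \<in> set e2. fst x < c \<Longrightarrow> merge_code ((c, bs) # e1) e2 = (c, bs) # merge_code e1 e2"
  by (cases e2) auto

lemma merge_code_Cons_right:
  "\<forall>x \<in> set e1. fst x < c \<Longrightarrow> merge_code e1 ((c, bs) # e2) = (c, bs) # merge_code e1 e2"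
  by (cases e1) auto

lemma ends_marked_append: "ends_marked bs1 \<Longrightarrow> ends_marked bs2 \<Longrightarrow> ends_marked (bs1 @ bs2)"
  by (auto simp: ends_marked_def last_append)

lemma ends_marked_ConsD: "ends_marked (x # bs) \<Longrightarrow> ends_marked bs"
  by (cases bs) (auto simp: ends_marked_def)

lemma count_list_True_pos: "ends_marked bs \<Longrightarrow> bs \<noteq> [] \<Longrightarrow> 0 < count_list bs True"
  by (metis count_list_0_iff ends_marked_def last_in_set neq0_conv)

lemma valid_merge_code: "valid_code e1 \<Longrightarrow> valid_code e2 \<Longrightarrow> valid_code (merge_code e1 e2)"
  by (induction e1 e2 rule: merge_code.induct)
     (fastforce simp: ends_marked_append dest: fst_in_merge_code)+

section \<open>Counting merge preimages\<close>

definition merge_preimage :: "word \<Rightarrow> word \<Rightarrow> col_code \<Rightarrow> (col_code \<times> col_code) set" where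
  "merge_preimage W1 W2 e = {(e1, e2). valid_code e1 \<and> valid_code e2
     \<and> code_word e1 = W1 \<and> code_word e2 = W2 \<and> merge_code e1 e2 = e}"

definition block_splits :: "bool list \<Rightarrow> nat \<Rightarrow> nat \<Rightarrow> (bool list \<times> bool list) set" where
  "block_splits bs a b = {(bs1, bs2). bs1 @ bs2 = bs \<and> ends_marked bs1 \<and> ends_marked bs2
     \<and> count_list bs1 True = a \<and> count_list bs2 True = b}"

lemma merge_preimage_Nil1:
  "merge_preimage [] W e = (if valid_code e \<and> code_word e = W then {([], e)} else {})"
proof -
  have "merge_preimage [] W e = {(e1, e2). e1 = [] \<and> e2 = e \<and> valid_code e \<and> code_word e = W}"
    by (auto simp: merge_preimage_def)
  then show ?thesis by auto
qed

lemma merge_preimage_Nil2: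
  "merge_preimage W [] e = (if valid_code e \<and> code_word e = W then {(e, [])} else {})"
proof -
  have "merge_preimage W [] e = {(e1, e2). e1 = e \<and> e2 = [] \<and> valid_code e \<and> code_word e = W}"
    by (auto simp: merge_preimage_def)
  then show ?thesis by auto
qed

lemma merge_preimage_Nil3:
  "merge_preimage W1 W2 [] = (if W1 = [] \<and> W2 = [] then {([], [])} else {})"
proof -
  have "merge_preimage W1 W2 [] = {(e1, e2). e1 = [] \<and> e2 = [] \<and> W1 = [] \<and> W2 = []}"
    by (auto simp: merge_preimage_def)
  then show ?thesis by auto
qed

lemma merge_preimage_below:
  assumes "valid_code ((c, bs) # e)" "(e1, e2) \<in> merge_preimage W1 W2 e"
  shows "\<forall>x \<in> set e1. fst x < c" "\<forall>x \<in> set e2. fst x < c"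
proof -
  have "fst ` set e1 \<union> fst ` set e2 = fst ` set e"
    using assms(2) columns_merge_code[of e1 e2] by (simp add: merge_preimage_def)
  moreover from assms(1) have "\<forall>c' \<in> fst ` set e. c' < c" by simp
  ultimately show "\<forall>x \<in> set e1. fst x < c" "\<forall>x \<in> set e2. fst x < c"
    by blast+
qed

lemma merge_preimage_extend_left:
  assumes "valid_code ((c, bs) # e)" "(e1, e2) \<in> merge_preimage v W e"
  shows "((c, bs) # e1, e2) \<in> merge_preimage (count_list bs True # v) W ((c, bs) # e)"
  using assms merge_preimage_below[OF assms]
  by (simp add: merge_preimage_def merge_code_Cons_left)

lemma merge_preimage_extend_right:
  assumes "valid_code ((c, bs) # e)" "(e1, e2) \<in> merge_preimage W w e"
  shows "(e1, (c, bs) # e2) \<in> merge_preimage W (count_list bs True # w) ((c, bs) # e)"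
  using assms merge_preimage_below[OF assms]
  by (simp add: merge_preimage_def merge_code_Cons_right)

lemma merge_preimage_extend_both:
  assumes "valid_code ((c, bs) # e)" "(e1, e2) \<in> merge_preimage v w e"
    and "(bs1, bs2) \<in> block_splits bs a b"
  shows "((c, bs1) # e1, (c, bs2) # e2) \<in> merge_preimage (a # v) (b # w) ((c, bs) # e)"
  using assms merge_preimage_below[OF assms(1,2)]
  by (auto simp: merge_preimage_def block_splits_def)

lemma merge_preimage_Cons:
  assumes "valid_code ((c, bs) # e)"
  shows "merge_preimage (a # v) (b # w) ((c, bs) # e) =
     (if a = count_list bs True
      then (\<lambda>(e1, e2). ((c, bs) # e1, e2)) ` merge_preimage v (b # w) e else {})
   \<union> (if b = count_list bs True
      then (\<lambda>(e1, e2). (e1, (c, bs) # e2)) ` merge_preimage (a # v) w e else {})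
   \<union> (\<lambda>((e1, e2), (bs1, bs2)). ((c, bs1) # e1, (c, bs2) # e2))
      ` (merge_preimage v w e \<times> block_splits bs a b)"
  (is "?P = ?L \<union> ?R \<union> ?B")
proof (intro equalityI subsetI)
  fix q assume "q \<in> ?P"
  then obtain c1 bs1 e1 c2 bs2 e2 where q: "q = ((c1, bs1) # e1, (c2, bs2) # e2)"
    and valid: "valid_code ((c1, bs1) # e1)" "valid_code ((c2, bs2) # e2)"
    and words: "count_list bs1 True = a" "code_word e1 = v"
      "count_list bs2 True = b" "code_word e2 = w"
    and merge: "merge_code ((c1, bs1) # e1) ((c2, bs2) # e2) = (c, bs) # e"
    unfolding merge_preimage_def by (auto simp: neq_Nil_conv code_word_def)
  consider "c2 < c1" | "c1 < c2" | "c1 = c2" by linarith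
  then show "q \<in> ?L \<union> ?R \<union> ?B"
  proof cases
    case 1
    with merge have "(e1, (c2, bs2) # e2) \<in> merge_preimage v (b # w) e" "c1 = c" "bs1 = bs"
      using valid words by (auto simp: merge_preimage_def)
    then show ?thesis using q words by auto
  next
    case 2
    with merge have "((c1, bs1) # e1, e2) \<in> merge_preimage (a # v) w e" "c2 = c" "bs2 = bs"
      using valid words by (auto simp: merge_preimage_def)
    then show ?thesis using q words by auto
  next
    case 3
    with merge have "(e1, e2) \<in> merge_preimage v w e" "(bs1, bs2) \<in> block_splits bs a b" "c1 = c"
      using valid words by (auto simp: merge_preimage_def block_splits_def)
    then show ?thesis using q 3 by force
  qed
next
  fix q assume "q \<in> ?L \<union> ?R \<union> ?B"
  then show "q \<in> ?P"
    using merge_preimage_extend_left[OF assms] merge_preimage_extend_right[OF assms]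
      merge_preimage_extend_both[OF assms]
    by (auto split: if_splits)
qed

lemma prefix_eq_if_count_eq:
  fixes u u' us :: "bool list"
  assumes "u = u' @ us" "count_list u True = count_list u' True" "ends_marked u"
  shows "u = u'"
proof (cases "us = []")
  case False
  from assms(1,2) have "True \<notin> set us" by (simp add: count_list_0_iff)
  then have "\<not> last us" using False by (metis last_in_set)
  moreover have "u \<noteq> [] \<and> last u = last us" using assms(1) False by simp
  ultimately show ?thesis using assms(3) by (simp add: ends_marked_def)
qed (use assms in simp)

lemma block_splits_unique:
  assumes "(bs1, bs2) \<in> block_splits bs a b" "(bs1', bs2') \<in> block_splits bs a b"
  shows "(bs1, bs2) = (bs1', bs2')"
proof -
  from assms have "bs1 @ bs2 = bs1' @ bs2'" and counts: "count_list bs1 True = count_list bs1' True"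
    and marked: "ends_marked bs1" "ends_marked bs1'"
    by (simp_all add: block_splits_def)
  then obtain us where "bs1 = bs1' @ us \<or> bs1' = bs1 @ us"
    by (metis append_eq_append_conv2)
  then have "bs1 = bs1'"
    using prefix_eq_if_count_eq[OF _ counts marked(1)]
      prefix_eq_if_count_eq[OF _ counts[symmetric] marked(2)]
    by metis
  with \<open>bs1 @ bs2 = bs1' @ bs2'\<close> show ?thesis by simp
qed

lemma block_splits_nonempty:
  "ends_marked bs \<Longrightarrow> count_list bs True = a + b \<Longrightarrow> block_splits bs a b \<noteq> {}"
proof (induction bs arbitrary: a)
  case Nil
  then show ?case by (auto simp: block_splits_def ends_marked_def)
next
  case (Cons x bs)
  show ?case
  proof (cases a)
    case 0
    with Cons.prems have "([], x # bs) \<in> block_splits (x # bs) a b"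
      by (simp add: block_splits_def ends_marked_def)
    then show ?thesis by blast
  next
    case (Suc n)
    let ?a' = "if x then n else a"
    from Cons.prems Suc have "block_splits bs ?a' b \<noteq> {}"
      by (intro Cons.IH) (auto dest: ends_marked_ConsD)
    then obtain bs1 bs2 where split: "(bs1, bs2) \<in> block_splits bs ?a' b" by auto
    with Suc have "bs1 \<noteq> [] \<or> x" by (auto simp: block_splits_def split: if_splits)
    with split Suc have "(x # bs1, bs2) \<in> block_splits (x # bs) a b"
      by (auto simp: block_splits_def ends_marked_def)
    then show ?thesis by blast
  qed
qed

lemma card_block_splits:
  assumes "ends_marked bs"
  shows "card (block_splits bs a b) = (if count_list bs True = a + b then 1 else 0)"
proof (cases "count_list bs True = a + b")
  case True
  then obtain s where s: "s \<in> block_splits bs a b"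
    using block_splits_nonempty[OF assms] by blast
  have "block_splits bs a b = {s}"
    using s block_splits_unique[of "fst s" "snd s" bs a b] by fastforce
  with True show ?thesis by simp
next
  case False
  then have "block_splits bs a b = {}" by (auto simp: block_splits_def)
  with False show ?thesis by simp
qed

lemma finite_block_splits: "finite (block_splits bs a b)"
proof (rule finite_subset)
  show "block_splits bs a b \<subseteq> (\<lambda>i. (take i bs, drop i bs)) ` {..length bs}"
  proof
    fix s assume "s \<in> block_splits bs a b"
    then have "s = (take (length (fst s)) bs, drop (length (fst s)) bs)"
      and "length (fst s) \<le> length bs"
      by (auto simp: block_splits_def)
    then show "s \<in> (\<lambda>i. (take i bs, drop i bs)) ` {..length bs}" by blast
  qed
qed simp

lemma count_image_mset_Cons:
  "count (image_mset ((#) a) M) (l # w) = (if a = l then count M w else 0)"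
  by (induction M) auto

lemma count_image_mset_Cons_Nil: "count (image_mset ((#) a) M) [] = 0"
  by (induction M) auto

lemma count_stuffle_Cons:
  "count (stuffle (a # v) (b # w)) (l # u) =
     (if a = l then count (stuffle v (b # w)) u else 0)
   + (if b = l then count (stuffle (a # v) w) u else 0)
   + (if a + b = l then count (stuffle v w) u else 0)"
  by (simp add: count_image_mset_Cons)

lemma finite_merge_preimage: "valid_code e \<Longrightarrow> finite (merge_preimage W1 W2 e)"
proof (induction e arbitrary: W1 W2)
  case Nil
  then show ?case by (simp add: merge_preimage_Nil3)
next
  case (Cons x e)
  obtain c bs where x: "x = (c, bs)" by (cases x)
  with Cons.prems have "valid_code e" by simp
  note IH = Cons.IH[OF this]
  show ?case
  proof (cases W1; cases W2)
    fix a v b w assume "W1 = a # v" "W2 = b # w"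
    with IH show ?thesis
      using merge_preimage_Cons[of c bs e a v b w] Cons.prems x finite_block_splits by simp
  qed (simp_all add: merge_preimage_Nil1 merge_preimage_Nil2)
qed

lemma card_merge_preimage_Cons:
  assumes valid: "valid_code ((c, bs) # e)"
  shows "card (merge_preimage (a # v) (b # w) ((c, bs) # e)) =
      (if a = count_list bs True then card (merge_preimage v (b # w) e) else 0)
    + (if b = count_list bs True then card (merge_preimage (a # v) w e) else 0)
    + (if a + b = count_list bs True then card (merge_preimage v w e) else 0)"
proof -
  define k where "k = count_list bs True"
  define L where
    "L = (if a = k then (\<lambda>(e1, e2). ((c, bs) # e1, e2)) ` merge_preimage v (b # w) e else {})"
  define R where
    "R = (if b = k then (\<lambda>(e1, e2). (e1, (c, bs) # e2)) ` merge_preimage (a # v) w e else {})"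
  define B where "B = (\<lambda>((e1, e2), (bs1, bs2)). ((c, bs1) # e1, (c, bs2) # e2))
    ` (merge_preimage v w e \<times> block_splits bs a b)"
  have fresh: "c \<notin> fst ` set e1" "c \<notin> fst ` set e2"
    if "(e1, e2) \<in> merge_preimage W1 W2 e" for e1 e2 W1 W2
    using merge_preimage_below[OF valid that] by auto
  have "c \<in> fst ` set (fst q) \<and> c \<notin> fst ` set (snd q)" if "q \<in> L" for q
    using that unfolding L_def by (force split: if_splits dest: fresh)
  moreover have "c \<notin> fst ` set (fst q) \<and> c \<in> fst ` set (snd q)" if "q \<in> R" for q
    using that unfolding R_def by (force split: if_splits dest: fresh)
  moreover have "c \<in> fst ` set (fst q) \<and> c \<in> fst ` set (snd q)" if "q \<in> B" for q
    using that unfolding B_def by auto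
  ultimately have disjoint: "L \<inter> R = {}" "(L \<union> R) \<inter> B = {}" by blast+
  from valid have "valid_code e" "ends_marked bs" by simp_all
  then have finite: "finite L" "finite R" "finite B"
    using finite_merge_preimage finite_block_splits unfolding L_def R_def B_def by simp_all
  have "card L = (if a = k then card (merge_preimage v (b # w) e) else 0)"
    unfolding L_def by (simp add: card_image inj_on_def split_def prod_eq_iff)
  moreover have "card R = (if b = k then card (merge_preimage (a # v) w e) else 0)"
    unfolding R_def by (simp add: card_image inj_on_def split_def prod_eq_iff)
  moreover have "card B = (if a + b = k then card (merge_preimage v w e) else 0)"
    unfolding B_def using card_block_splits[OF \<open>ends_marked bs\<close>]
    by (subst card_image) (auto simp: inj_on_def card_cartesian_product k_def)
  moreover have "merge_preimage (a # v) (b # w) ((c, bs) # e) = L \<union> R \<union> B"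
    unfolding L_def R_def B_def k_def using merge_preimage_Cons[OF valid] by blast
  ultimately show ?thesis
    using disjoint finite by (simp add: card_Un_disjoint k_def)
qed

lemma card_merge_preimage:
  "valid_code e \<Longrightarrow> card (merge_preimage W1 W2 e) = count (stuffle W1 W2) (code_word e)"
proof (induction e arbitrary: W1 W2)
  case Nil
  show ?case
  proof (cases W1; cases W2)
    fix a v b w assume "W1 = a # v" "W2 = b # w"
    then show ?thesis by (simp add: merge_preimage_Nil3 count_image_mset_Cons_Nil)
  qed (auto simp: merge_preimage_Nil3)
next
  case (Cons x e)
  obtain c bs where x: "x = (c, bs)" by (cases x)
  show ?case
  proof (cases W1; cases W2)
    fix a v b w assume "W1 = a # v" "W2 = b # w"
    with Cons x show ?thesis
      by (simp add: card_merge_preimage_Cons count_stuffle_Cons del: stuffle.simps)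
  qed (use Cons.prems x in \<open>simp_all add: merge_preimage_Nil1 merge_preimage_Nil2\<close>)
qed

section \<open>Decoding column codes into marked partitions\<close>

definition code_rows :: "col_code \<Rightarrow> (nat \<times> bool) list" where
  "code_rows e = concat (map (\<lambda>(c, bs). map (Pair c) bs) e)"

definition decode :: "col_code \<Rightarrow> mpart" where
  "decode e = (code_rows e, fst ` set e)"

lemma code_rows_Nil [simp]: "code_rows [] = []"
  and code_rows_Cons [simp]: "code_rows ((c, bs) # e) = map (Pair c) bs @ code_rows e"
  by (simp_all add: code_rows_def)

lemma fst_code_rows: "r \<in> set (code_rows e) \<Longrightarrow> fst r \<in> fst ` set e"
  by (induction e) auto

lemma code_rows_below: "\<forall>x \<in> set e. fst x < c \<Longrightarrow> \<forall>r \<in> set (code_rows e). fst r < c"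
  using fst_code_rows by fastforce

lemma circ_word_code_word_iff:
  "valid_code e \<Longrightarrow> circ_word (code_word e) \<longleftrightarrow> e = [] \<or> snd (hd e) \<noteq> []"
  by (cases e) (auto simp: circ_word_def count_list_True_pos)

lemma code_rows_eq_Nil_iff:
  "valid_code e \<Longrightarrow> circ_word (code_word e) \<Longrightarrow> code_rows e = [] \<longleftrightarrow> e = []"
  by (cases e) (auto simp: circ_word_code_word_iff)

lemma merge_rows_Nil2 [simp]: "merge_rows xs [] = xs"
  by (cases xs) auto

lemma merge_rows_block_left:
  "\<forall>r \<in> set ys. fst r \<le> c
    \<Longrightarrow> merge_rows (map (Pair c) bs @ xs) ys = map (Pair c) bs @ merge_rows xs ys"
proof (induction bs)
  case (Cons b bs)
  then show ?case by (cases ys) auto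
qed simp

lemma merge_rows_block_right:
  "\<forall>r \<in> set xs. fst r < c
    \<Longrightarrow> merge_rows xs (map (Pair c) bs @ ys) = map (Pair c) bs @ merge_rows xs ys"
proof (induction bs)
  case (Cons b bs)
  then show ?case by (cases xs) auto
qed simp

lemma code_rows_merge_code:
  "valid_code e1 \<Longrightarrow> valid_code e2
    \<Longrightarrow> code_rows (merge_code e1 e2) = merge_rows (code_rows e1) (code_rows e2)"
proof (induction e1 e2 rule: merge_code.induct)
  case (3 c1 bs1 e1 c2 bs2 e2)
  let ?rows1 = "code_rows ((c1, bs1) # e1)" and ?rows2 = "code_rows ((c2, bs2) # e2)"
  have below: "\<forall>r \<in> set (code_rows e1). fst r < c1" "\<forall>r \<in> set (code_rows e2). fst r < c2"
    using "3.prems" code_rows_below[of e1 c1] code_rows_below[of e2 c2] by simp_all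
  consider "c2 < c1" | "c1 < c2" | "c1 = c2" by linarith
  then show ?case
  proof cases
    case 1
    with below have "\<forall>r \<in> set ?rows2. fst r \<le> c1" by auto
    with 1 "3" show ?thesis by (simp add: merge_rows_block_left)
  next
    case 2
    with below have "\<forall>r \<in> set ?rows1. fst r < c2" by auto
    with 2 "3" show ?thesis by (simp add: merge_rows_block_right)
  next
    case 3
    with below have "\<forall>r \<in> set ?rows2. fst r \<le> c1" "\<forall>r \<in> set (code_rows e1). fst r < c2" by auto
    with 3 "3.IH"(3) "3.prems" show ?thesis
      by (simp add: merge_rows_block_left merge_rows_block_right)
  qed
qed auto

lemma Phi_decode:
  assumes "valid_code e1" "valid_code e2" "circ_word (code_word e1)" "circ_word (code_word e2)"
  shows "Phi (decode e1) (decode e2) = decode (merge_code e1 e2)"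
  using assms code_rows_merge_code[OF assms(1,2)] columns_merge_code[of e1 e2]
  by (simp add: Phi_def decode_def code_rows_eq_Nil_iff)

fun lowest_rows_marked :: "(nat \<times> bool) list \<Rightarrow> bool" where
  "lowest_rows_marked [] \<longleftrightarrow> True"
| "lowest_rows_marked (r # rs) \<longleftrightarrow> ((rs = [] \<or> fst (hd rs) < fst r) \<longrightarrow> snd r) \<and> lowest_rows_marked rs"

lemma lowest_rows_marked_iff:
  "lowest_rows_marked rs \<longleftrightarrow>
     (\<forall>i < length rs. (Suc i = length rs \<or> fst (rs ! Suc i) < fst (rs ! i)) \<longrightarrow> snd (rs ! i))"
proof (induction rs)
  case (Cons r rs)
  have "(Suc 0 = length (r # rs) \<or> fst ((r # rs) ! Suc 0) < fst r)
      \<longleftrightarrow> (rs = [] \<or> fst (hd rs) < fst r)"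
    by (cases rs) auto
  with Cons.IH show ?case
    by (simp only: lowest_rows_marked.simps length_Cons All_less_Suc2 nth_Cons_0 nth_Cons_Suc
        nat.inject)
qed simp

lemma lowest_rows_marked_block:
  "ends_marked bs \<Longrightarrow> lowest_rows_marked rs \<Longrightarrow> \<forall>r \<in> set rs. fst r < c
    \<Longrightarrow> lowest_rows_marked (map (Pair c) bs @ rs)"
proof (induction bs)
  case (Cons b bs)
  then show ?case by (cases bs) (auto simp: ends_marked_def)
qed simp

lemma lowest_rows_marked_code_rows: "valid_code e \<Longrightarrow> lowest_rows_marked (code_rows e)"
  by (induction e) (auto intro!: lowest_rows_marked_block code_rows_below)

lemma sorted_code_rows: "valid_code e \<Longrightarrow> sorted_wrt (\<ge>) (map fst (code_rows e))"
proof (induction e)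
  case (Cons x e)
  obtain c bs where x: "x = (c, bs)" by (cases x)
  with Cons.prems have "\<forall>r \<in> set (code_rows e). fst r \<le> c"
    using code_rows_below[of e c] by (auto simp: less_imp_le)
  with Cons x show ?case by (simp add: sorted_wrt_append sorted_wrt_map)
qed simp

lemma is_mp_decode:
  assumes valid: "valid_code e" and circ: "circ_word (code_word e)"
  shows "is_mp (decode e)"
proof -
  have positive: "\<forall>r \<in> set (code_rows e). 0 < fst r"
    using valid fst_code_rows by (fastforce simp: valid_code_def)
  have covered: "\<exists>r \<in> set (code_rows e). c \<le> fst r" if "c \<in> fst ` set e" for c
  proof -
    from that obtain c0 bs0 e' where e: "e = (c0, bs0) # e'" by (cases e) auto
    with circ circ_word_code_word_iff[OF valid] have "bs0 \<noteq> []" by simp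
    then have "(c0, hd bs0) \<in> set (code_rows e)" using e by (cases bs0) auto
    moreover have "c \<le> c0" using that valid e by (auto simp: less_imp_le)
    ultimately show ?thesis by force
  qed
  have "\<forall>c \<in> fst ` set e. 1 \<le> c" using valid by (auto simp: valid_code_def)
  then show ?thesis
    using positive covered fst_code_rows sorted_code_rows[OF valid]
      lowest_rows_marked_code_rows[OF valid]
    unfolding is_mp_def decode_def lowest_rows_marked_iff by (simp add: Let_def)
qed

text \<open>\<^const>\<open>mp_type\<close> as a recursion over the distinct part lengths \<open>m\<^sub>1 > m\<^sub>2 > \<dots>\<close>:
\<open>hd (ms @ [0])\<close> is the next part length, or \<open>0\<close> after the last one.\<close>

fun lengths_word :: "(nat \<times> bool) list \<Rightarrow> nat set \<Rightarrow> nat list \<Rightarrow> word" where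
  "lengths_word R C [] = []"
| "lengths_word R C (m # ms) =
     length (filter (\<lambda>r. fst r = m \<and> snd r) R)
     # replicate (card {c \<in> C. hd (ms @ [0]) < c \<and> c \<le> m} - 1) 0 @ lengths_word R C ms"

lemma mp_type_eq_lengths_word: "mp_type (R, C) = lengths_word R C (remdups (map fst R))"
proof -
  have "concat (map (\<lambda>j. length (filter (\<lambda>r. fst r = ms ! j \<and> snd r) R)
      # replicate (card {c \<in> C. (if Suc j < length ms then ms ! Suc j else 0) < c \<and> c \<le> ms ! j} - 1)
          0)
      [0..<length ms]) = lengths_word R C ms" for ms
  proof (induction ms)
    case (Cons m ms)
    have "[0..<length (m # ms)] = 0 # map Suc [0..<length ms]"
      by (simp add: upt_conv_Cons map_Suc_upt del: upt_Suc)
    moreover have "(if Suc 0 < length (m # ms) then (m # ms) ! Suc 0 else 0) = hd (ms @ [0])"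
      by (cases ms) auto
    ultimately show ?case using Cons.IH by (simp add: comp_def del: upt_Suc cong: if_cong)
  qed simp
  then show ?thesis by (simp add: mp_type_def Let_def)
qed

lemma lengths_word_cong:
  assumes "\<forall>m \<in> set ms.
      length (filter (\<lambda>r. fst r = m \<and> snd r) R) = length (filter (\<lambda>r. fst r = m \<and> snd r) R')"
    and "\<forall>m \<in> set ms. {c \<in> C. c \<le> m} = {c \<in> C'. c \<le> m}"
  shows "lengths_word R C ms = lengths_word R' C' ms"
proof -
  have "{c \<in> C. lo < c \<and> c \<le> m} = {c \<in> C'. lo < c \<and> c \<le> m}" if "m \<in> set ms" for lo m
    using assms(2) that by blast
  with assms(1) show ?thesis by (induction ms) auto
qed

definition part_lengths :: "col_code \<Rightarrow> nat list" where
  "part_lengths e = map fst (filter (\<lambda>x. snd x \<noteq> []) e)"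

lemma part_lengths_Cons [simp]:
  "part_lengths ((c, bs) # e) = (if bs = [] then part_lengths e else c # part_lengths e)"
  by (simp add: part_lengths_def)

lemma remdups_code_rows: "valid_code e \<Longrightarrow> remdups (map fst (code_rows e)) = part_lengths e"
proof (induction e)
  case (Cons x e)
  obtain c bs where x: "x = (c, bs)" by (cases x)
  with Cons.prems have "c \<notin> set (map fst (code_rows e))"
    using code_rows_below[of e c] by auto
  then have "remdups (replicate n c @ map fst (code_rows e))
      = (if n = 0 then [] else [c]) @ remdups (map fst (code_rows e))" for n
    by (induction n) auto
  with Cons x show ?case by (simp add: comp_def map_replicate_const)
qed (simp add: part_lengths_def)

lemma distinct_columns: "valid_code e \<Longrightarrow> distinct (map fst e)"
  by (induction e) fastforce+

lemma valid_code_takeWhile: "valid_code e \<Longrightarrow> valid_code (takeWhile P e)"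
  by (induction e) (auto dest!: set_takeWhileD)

lemma next_part_length_less: "valid_code ((c, bs) # e) \<Longrightarrow> hd (part_lengths e @ [0]) < c"
proof -
  assume valid: "valid_code ((c, bs) # e)"
  have "hd (part_lengths e @ [0]) \<in> set (part_lengths e @ [0])"
    by (rule hd_in_set) simp
  with valid show ?thesis by (auto simp: part_lengths_def)
qed

lemma columns_above_next_part_length:
  "valid_code e
    \<Longrightarrow> {c \<in> fst ` set e. hd (part_lengths e @ [0]) < c} = fst ` set (takeWhile (\<lambda>x. snd x = []) e)"
proof (induction e)
  case (Cons x e)
  obtain c bs where x: "x = (c, bs)" by (cases x)
  with Cons.prems have "hd (part_lengths e @ [0]) < c"
    by (simp only: next_part_length_less)
  with Cons x show ?case by (cases "bs = []") (auto simp: image_iff)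
qed (simp add: part_lengths_def)

lemma card_columns_of_part:
  assumes valid: "valid_code ((c, bs) # e)"
  shows "card {c' \<in> fst ` set ((c, bs) # e). hd (part_lengths e @ [0]) < c' \<and> c' \<le> c}
    = Suc (length (takeWhile (\<lambda>x. snd x = []) e))"
proof -
  let ?empty = "takeWhile (\<lambda>x. snd x = []) e"
  from valid have "valid_code e" and "\<forall>x \<in> set e. fst x < c" by simp_all
  then have empty_below: "\<forall>x \<in> set ?empty. fst x < c" by (blast dest: set_takeWhileD)
  have "{c' \<in> fst ` set ((c, bs) # e). hd (part_lengths e @ [0]) < c' \<and> c' \<le> c}
      = insert c (fst ` set ?empty)"
    using columns_above_next_part_length[OF \<open>valid_code e\<close>] next_part_length_less[OF valid]
      empty_below
    by (auto simp: less_imp_le)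
  moreover have "card (fst ` set ?empty) = length ?empty"
    using distinct_card[OF distinct_columns[OF valid_code_takeWhile[OF \<open>valid_code e\<close>]]] by simp
  moreover have "c \<notin> fst ` set ?empty" using empty_below by auto
  ultimately show ?thesis by simp
qed

lemma code_word_takeWhile_dropWhile:
  "code_word e
    = replicate (length (takeWhile (\<lambda>x. snd x = []) e)) 0 @ code_word (dropWhile (\<lambda>x. snd x = []) e)"
  by (induction e) (auto simp: code_word_def)

lemma lengths_word_code_rows:
  "valid_code e \<Longrightarrow>
    lengths_word (code_rows e) (fst ` set e) (part_lengths e) = code_word (dropWhile (\<lambda>x. snd x = []) e)"
proof (induction e)
  case (Cons x e)
  obtain c bs where x: "x = (c, bs)" by (cases x)
  let ?R = "code_rows ((c, bs) # e)"
  from Cons.prems x have valid: "valid_code e" and below: "\<forall>x \<in> set e. fst x < c" by simp_all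
  have marked_rows: "length (filter (\<lambda>r. fst r = m \<and> snd r) ?R)
      = (if m = c then count_list bs True else 0)
        + length (filter (\<lambda>r. fst r = m \<and> snd r) (code_rows e))" for m
    by (induction bs) auto
  have "lengths_word ?R (fst ` set ((c, bs) # e)) (part_lengths e)
      = lengths_word (code_rows e) (fst ` set e) (part_lengths e)"
    using below by (intro lengths_word_cong) (auto simp: marked_rows part_lengths_def)
  with Cons.IH[OF valid] have tail: "lengths_word ?R (fst ` set ((c, bs) # e)) (part_lengths e)
      = code_word (dropWhile (\<lambda>x. snd x = []) e)" by simp
  have no_marked_c: "length (filter (\<lambda>r. fst r = c \<and> snd r) (code_rows e)) = 0"
    using below code_rows_below[of e c] by (auto simp: filter_empty_conv)
  show ?case
  proof (cases "bs = []")
    case True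
    with x tail show ?thesis by simp
  next
    case False
    with x tail marked_rows[of c] no_marked_c card_columns_of_part[OF Cons.prems[unfolded x]]
    show ?thesis using code_word_takeWhile_dropWhile[of e] by simp
  qed
qed (simp add: part_lengths_def)

lemma mp_type_decode:
  assumes "valid_code e" "circ_word (code_word e)"
  shows "mp_type (decode e) = code_word e"
proof -
  have "dropWhile (\<lambda>x. snd x = []) e = e"
    using assms circ_word_code_word_iff by (cases e) auto
  with assms(1) show ?thesis
    by (simp add: decode_def mp_type_eq_lengths_word remdups_code_rows lengths_word_code_rows)
qed

section \<open>Encoding marked partitions\<close>

definition encode :: "mpart \<Rightarrow> col_code" where
  "encode p =
    map (\<lambda>c. (c, map snd (filter (\<lambda>r. fst r = c) (fst p)))) (rev (sorted_list_of_set (snd p)))"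

lemma filter_code_rows:
  "valid_code e \<Longrightarrow> (c, bs) \<in> set e \<Longrightarrow> filter (\<lambda>r. fst r = c) (code_rows e) = map (Pair c) bs"
proof (induction e)
  case (Cons x e)
  obtain c' bs' where x: "x = (c', bs')" by (cases x)
  have block:
    "filter (\<lambda>r. fst r = c) (map (Pair c') bs') = (if c' = c then map (Pair c) bs' else [])"
    by (induction bs') auto
  show ?case
  proof (cases "c' = c")
    case True
    with Cons.prems x have "bs' = bs" "\<forall>r \<in> set (code_rows e). fst r \<noteq> c"
      using code_rows_below[of e c] by auto
    with True x block show ?thesis by simp
  next
    case False
    with Cons x block show ?thesis by simp
  qed
qed simp

lemma sorted_list_of_columns: "valid_code e \<Longrightarrow> sorted_list_of_set (fst ` set e) = rev (map fst e)"
proof -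
  assume "valid_code e"
  then have "sorted_wrt (<) (rev (map fst e))"
    by (simp add: valid_code_def sorted_wrt_rev)
  then show ?thesis
    by (metis set_map set_rev sorted_list_of_set_sort_remdups strict_sorted_iff distinct_remdups_id
        sorted_sort_id)
qed

lemma encode_decode: "valid_code e \<Longrightarrow> encode (decode e) = e"
  unfolding encode_def decode_def
  by (auto simp: sorted_list_of_columns filter_code_rows comp_def intro!: map_idI)

lemma ends_marked_block:
  "lowest_rows_marked R \<Longrightarrow> sorted_wrt (\<ge>) (map fst R)
    \<Longrightarrow> ends_marked (map snd (filter (\<lambda>r. fst r = c) R))"
proof (induction R)
  case (Cons r R)
  show ?case
  proof (cases "fst r = c \<and> filter (\<lambda>r. fst r = c) R = []")
    case True
    then have "R = [] \<or> fst (hd R) < fst r"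
      using Cons.prems(2) by (cases R) (auto split: if_splits)
    with True Cons.prems(1) show ?thesis by (auto simp: ends_marked_def)
  next
    case False
    with Cons show ?thesis by (auto simp: ends_marked_def)
  qed
qed (simp add: ends_marked_def)

lemma filter_fst_eq_append:
  fixes R :: "('a :: linorder \<times> 'b) list"
  shows "sorted_wrt (\<ge>) (map fst R) \<Longrightarrow> \<forall>r \<in> set R. fst r \<le> c
    \<Longrightarrow> filter (\<lambda>r. fst r = c) R @ filter (\<lambda>r. fst r \<noteq> c) R = R"
proof (induction R)
  case (Cons r R)
  show ?case
  proof (cases "fst r = c")
    case False
    with Cons.prems have "fst r < c" "\<forall>r' \<in> set R. fst r' \<le> fst r" by (auto simp: le_less)
    then have "\<forall>r' \<in> set R. fst r' < c" by (auto intro: le_less_trans)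
    then have "filter (\<lambda>r. fst r = c) R = []" "filter (\<lambda>r. fst r \<noteq> c) R = R"
      by (auto simp: filter_empty_conv filter_id_conv)
    with False show ?thesis by simp
  qed (use Cons in auto)
qed simp

lemma concat_filter_fst_eq:
  fixes R :: "('a :: linorder \<times> 'b) list"
  shows "sorted_wrt (\<ge>) (map fst R) \<Longrightarrow> sorted_wrt (>) cs \<Longrightarrow> fst ` set R \<subseteq> set cs
    \<Longrightarrow> concat (map (\<lambda>c. filter (\<lambda>r. fst r = c) R) cs) = R"
proof (induction cs arbitrary: R)
  case (Cons c cs)
  let ?R' = "filter (\<lambda>r. fst r \<noteq> c) R"
  have "\<forall>c' \<in> set (c # cs). c' \<le> c" using Cons.prems(2) by (auto simp: le_less)
  with Cons.prems(3) have "\<forall>r \<in> set R. fst r \<le> c" by blast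
  then have R: "filter (\<lambda>r. fst r = c) R @ ?R' = R"
    using filter_fst_eq_append Cons.prems(1) by blast
  have blocks: "map (\<lambda>c'. filter (\<lambda>r. fst r = c') R) cs = map (\<lambda>c'. filter (\<lambda>r. fst r = c') ?R') cs"
    using Cons.prems(2) by (auto simp: filter_filter intro!: filter_cong)
  have IH: "concat (map (\<lambda>c'. filter (\<lambda>r. fst r = c') ?R') cs) = ?R'"
    using Cons.prems by (intro Cons.IH) (auto simp: sorted_wrt_map sorted_wrt_filter)
  show ?case unfolding list.map(2) concat.simps(2) blocks IH by (rule R)
qed simp

lemma finite_columns: "is_mp p \<Longrightarrow> finite (snd p)"
proof (rule finite_subset)
  assume "is_mp p"
  then show "snd p \<subseteq> (\<Union>r \<in> set (fst p). {..fst r})"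
    by (auto simp: is_mp_def Let_def)
qed simp

lemma block_of_encode: "(c, bs) \<in> set (encode p) \<Longrightarrow> bs = map snd (filter (\<lambda>r. fst r = c) (fst p))"
  by (auto simp: encode_def)

lemma columns_encode:
  assumes "is_mp p"
  shows "sorted_wrt (>) (map fst (encode p))" "fst ` set (encode p) = snd p"
proof -
  have columns: "map fst (encode p) = rev (sorted_list_of_set (snd p))"
    by (simp add: encode_def comp_def)
  with finite_columns[OF assms] show "sorted_wrt (>) (map fst (encode p))"
    by (simp add: sorted_wrt_rev)
  from arg_cong[where f = set, OF columns] finite_columns[OF assms]
  show "fst ` set (encode p) = snd p" by simp
qed

lemma valid_encode:
  assumes "is_mp p"
  shows "valid_code (encode p)"
proof -
  obtain R C where p: "p = (R, C)" by (cases p)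
  from assms have "lowest_rows_marked R" "sorted_wrt (\<ge>) (map fst R)" "\<forall>c \<in> C. 1 \<le> c"
    unfolding p is_mp_def lowest_rows_marked_iff by (simp_all add: Let_def)
  moreover have "c \<in> C" if "(c, bs) \<in> set (encode p)" for c bs
    using that columns_encode(2)[OF assms] p by force
  ultimately have "0 < c \<and> ends_marked bs" if "(c, bs) \<in> set (encode p)" for c bs
    using that block_of_encode[OF that] ends_marked_block by (fastforce simp: p)
  with columns_encode(1)[OF assms] show ?thesis by (auto simp: valid_code_def)
qed

lemma decode_encode:
  assumes "is_mp p"
  shows "decode (encode p) = p"
proof -
  obtain R C where p: "p = (R, C)" by (cases p)
  from assms have sorted: "sorted_wrt (\<ge>) (map fst R)" and rows: "fst ` set R \<subseteq> C"
    unfolding p is_mp_def by (auto simp: Let_def)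
  let ?cs = "rev (sorted_list_of_set C)"
  have "map (Pair c) (map snd (filter (\<lambda>r. fst r = c) R)) = filter (\<lambda>r. fst r = c) R" for c
    by (induction R) auto
  then have "code_rows (encode p) = concat (map (\<lambda>c. filter (\<lambda>r. fst r = c) R) ?cs)"
    by (simp add: encode_def code_rows_def comp_def p)
  also have "\<dots> = R"
    using sorted rows finite_columns[OF assms]
    by (intro concat_filter_fst_eq) (simp_all add: p sorted_wrt_rev)
  finally show ?thesis using columns_encode(2)[OF assms] by (simp add: decode_def p)
qed

lemma circ_word_encode:
  assumes "is_mp p"
  shows "circ_word (code_word (encode p))"
proof (cases "encode p")
  case (Cons x e)
  obtain R C where p: "p = (R, C)" by (cases p)
  obtain c0 bs0 where x: "x = (c0, bs0)" by (cases x)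
  have "C = insert c0 (fst ` set e)" "\<forall>c \<in> fst ` set e. c < c0"
    using columns_encode[OF assms] Cons x p by auto
  moreover from assms have "\<forall>c \<in> C. \<exists>r \<in> set R. c \<le> fst r" "fst ` set R \<subseteq> C"
    unfolding p is_mp_def by (auto simp: Let_def)
  ultimately obtain r where "r \<in> set R" "fst r = c0" by fastforce
  then have "bs0 \<noteq> []"
    using block_of_encode[of c0 bs0 p] Cons x p by (auto simp: filter_empty_conv)
  with Cons x show ?thesis using circ_word_code_word_iff[OF valid_encode[OF assms]] by simp
qed (simp add: circ_word_def)

lemma MP_eq_decode_image:
  assumes "circ_word W"
  shows "MP W = decode ` {e. valid_code e \<and> code_word e = W}"
proof (intro equalityI subsetI)
  fix p assume "p \<in> MP W"
  then have p: "is_mp p" "mp_type p = W" by (simp_all add: MP_def)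
  have "code_word (encode p) = mp_type (decode (encode p))"
    using mp_type_decode[OF valid_encode circ_word_encode, OF p(1) p(1)] by simp
  with p have "code_word (encode p) = W" by (simp add: decode_encode)
  with p(1) show "p \<in> decode ` {e. valid_code e \<and> code_word e = W}"
    by (intro image_eqI[where x = "encode p"]) (simp_all add: decode_encode valid_encode)
next
  fix p assume "p \<in> decode ` {e. valid_code e \<and> code_word e = W}"
  then obtain e where "valid_code e" "code_word e = W" "p = decode e" by blast
  with assms show "p \<in> MP W" by (simp add: MP_def is_mp_decode mp_type_decode)
qed

lemma inj_on_decode: "inj_on decode {e. valid_code e}"
  by (rule inj_onI) (metis encode_decode mem_Collect_eq)

lemma Phi_preimage_eq_image:
  assumes "circ_word W1" "circ_word W2" "valid_code e"
  shows "{(p1, p2). p1 \<in> MP W1 \<and> p2 \<in> MP W2 \<and> Phi p1 p2 = decode e}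
    = map_prod decode decode ` merge_preimage W1 W2 e"
proof (intro equalityI subsetI)
  fix q assume "q \<in> {(p1, p2). p1 \<in> MP W1 \<and> p2 \<in> MP W2 \<and> Phi p1 p2 = decode e}"
  then obtain e1 e2 where "q = (decode e1, decode e2)" "valid_code e1" "valid_code e2"
    "code_word e1 = W1" "code_word e2 = W2" "Phi (decode e1) (decode e2) = decode e"
    using assms(1,2) by (auto simp: MP_eq_decode_image)
  moreover from calculation have "merge_code e1 e2 = e"
    using assms Phi_decode inj_on_decode[THEN inj_onD] valid_merge_code by force
  ultimately show "q \<in> map_prod decode decode ` merge_preimage W1 W2 e"
    by (auto simp: merge_preimage_def)
next
  fix q assume "q \<in> map_prod decode decode ` merge_preimage W1 W2 e"
  with assms(1,2) show "q \<in> {(p1, p2). p1 \<in> MP W1 \<and> p2 \<in> MP W2 \<and> Phi p1 p2 = decode e}"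
    by (auto simp: merge_preimage_def MP_eq_decode_image Phi_decode)
qed

theorem theorem1p9:
  fixes W1 W2 W :: word and p :: mpart
  assumes "circ_word W1" and "circ_word W2" and "circ_word W"
    and "p \<in> MP W"
  shows "mp_coeff W1 W2 p = stuffle_coeff W1 W2 W"
proof -
  obtain e where e: "valid_code e" "code_word e = W" "p = decode e"
    using assms(3,4) MP_eq_decode_image by blast
  have "inj_on (map_prod decode decode) (merge_preimage W1 W2 e)"
    using inj_on_decode by (auto simp: inj_on_def merge_preimage_def)
  then have "mp_coeff W1 W2 p = card (merge_preimage W1 W2 e)"
    unfolding mp_coeff_def e(3) Phi_preimage_eq_image[OF assms(1,2) e(1)] by (rule card_image)
  also have "\<dots> = stuffle_coeff W1 W2 W"
    using card_merge_preimage[OF e(1)] e(2) by (simp add: stuffle_coeff_def)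
  finally show ?thesis .
qed

end
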